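(* Let $\theta>-1$, $\beta>0$, and let $\mathscr{L}_i^{(\theta,\beta)}$, $i=0,1,2,\dots$, denote the generalized Laguerre polynomials $$\mathscr{L}_i^{(\theta,\beta)}(x)=\frac{1}{i!}x^{-\theta}e^{\beta x}\frac{d^i}{dx^i}\big(x^{i+\theta}e^{-\beta x}\big).$$ Let $n$ be a positive integer and $\varrho:(0,\infty)\to\mathbb{R}$ with $n-1<\varrho_{\min}<\varrho(x)<\varrho_{\max}<n$ for all $x>0$. For a sufficiently smooth function $u$ on $[0,\infty)$ define the variable-order Caputo derivative $${}_0^{C}\mathscr{D}_x^{\varrho(x)}u(x)=\frac{1}{\Gamma(n-\varrho(x))}\int_0^x (x-t)^{n-\varrho(x)-1}u^{(n)}(t)\,dt,$$ and for a function $\mu:(0,\infty)\to(0,\infty)$, $\alpha>-1$ and $k\ge0$ let $$\hat{\mathscr{L}}_k^{(\mu(x),\alpha,\beta)}(x)=\frac{1}{\Gamma(\mu(x))}\int_0^x (x-t)^{\mu(x)-1}\mathscr{L}_k^{(\alpha,\beta)}(t)\,dt .$$ Then for every $N\ge0$ and real coefficients $\ell_0,\dots,\ell_N$, the polynomial $u_N=\sum_{i=0}^N \ell_i\mathscr{L}_i^{(\theta,\beta)}$ satisfies, for all $x>0$, $${}_0^{C}\mathscr{D}_x^{\varrho(x)}u_N(x)=\sum_{i=0}^N \ell_i\,D_{i,n,\theta,\beta}^{(\varrho(x))}(x),$$ where $D_{i,n,\theta,\beta}^{(\varrho(x))}(x)=0$ for $0\le i\le n-1$ and $$D_{i,n,\theta,\beta}^{(\varrho(x))}(x)=(-\beta)^n\,\hat{\mathscr{L}}_{i-n}^{(n-\varrho(x),\theta+n,\beta)}(x)\quad\text{for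 } i\ge n.$$
   Context: Here the fractional order $\varrho(x)$ (resp. $\mu(x)$) is frozen at the outer variable $x$ inside the integral. The generalized Laguerre polynomials are orthogonal on $(0,\infty)$ with respect to the weight $x^\theta e^{-\beta x}$. *)

theory Defs
  imports "HOL-Analysis.Analysis"
begin

text \<open>Generalized Laguerre polynomial via the Rodrigues formula (meaningful for x > 0).\<close>
definition gen_laguerre :: "real \<Rightarrow> real \<Rightarrow> nat \<Rightarrow> real \<Rightarrow> real" where
  "gen_laguerre \<theta> \<beta> i x =
     (1 / fact i) * x powr (-\<theta>) * exp (\<beta> * x) *
     (deriv ^^ i) (\<lambda>y. y powr (real i + \<theta>) * exp (- \<beta> * y)) x"

definition caputo_var :: "(real \<Rightarrow> real) \<Rightarrow> nat \<Rightarrow> (real \<Rightarrow> real) \<Rightarrow> real \<Rightarrow> real" where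
  "caputo_var \<rho> n u x =
     (1 / Gamma (real n - \<rho> x)) *
     integral {0..x} (\<lambda>t. (x - t) powr (real n - \<rho> x - 1) * (deriv ^^ n) u t)"

definition lag_hat :: "(real \<Rightarrow> real) \<Rightarrow> real \<Rightarrow> real \<Rightarrow> nat \<Rightarrow> real \<Rightarrow> real" where
  "lag_hat \<mu> \<alpha> \<beta> k x =
     (1 / Gamma (\<mu> x)) *
     integral {0..x} (\<lambda>t. (x - t) powr (\<mu> x - 1) * gen_laguerre \<alpha> \<beta> k t)"

definition D_coef :: "nat \<Rightarrow> nat \<Rightarrow> real \<Rightarrow> real \<Rightarrow> (real \<Rightarrow> real) \<Rightarrow> real \<Rightarrow> real" where
  "D_coef i n \<theta> \<beta> \<rho> x =
     (if i < n then 0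
      else (- \<beta>) ^ n * lag_hat (\<lambda>y. real n - \<rho> y) (\<theta> + real n) \<beta> (i - n) x)"

end

theory Submission
  imports Defs "HOL-Computational_Algebra.Polynomial"
begin

text \<open>
  By the Rodrigues formula each generalized Laguerre polynomial agrees on \<open>(0,\<infinity>)\<close> with a
  polynomial, whose derivative is \<open>-\<beta>\<close> times the Laguerre polynomial of one degree less and
  parameter \<open>\<theta> + 1\<close>. Hence the \<open>n\<close>-th derivative of \<open>u\<^sub>N\<close> is
  \<open>(-\<beta>)\<^sup>n\<close> times the combination of the parameter-\<open>(\<theta> + n)\<close> polynomials of degree \<open>i - n\<close>,
  \<open>i \<ge> n\<close>, and since the kernel \<open>(x - t)\<^sup>n\<^sup>-\<^sup>\<rho>\<^sup>(\<^sup>x\<^sup>)\<^sup>-\<^sup>1\<close> is integrable the Caputo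
  derivative splits linearly into the terms \<open>D\<^sub>i\<close>.
\<close>

lemma funpow_deriv_eq_on_open:
  fixes g :: "nat \<Rightarrow> 'a::real_normed_field \<Rightarrow> 'a"
  assumes "open S"
    and "\<And>k y. y \<in> S \<Longrightarrow> (g k has_field_derivative g (Suc k) y) (at y)"
    and "\<And>y. y \<in> S \<Longrightarrow> f y = g 0 y" and "y \<in> S"
  shows "(deriv ^^ k) f y = g k y"
  using assms(2-4)
proof (induction k arbitrary: f g y)
  case 0
  then show ?case by simp
next
  case (Suc k)
  have deriv_f: "deriv f z = g 1 z" if "z \<in> S" for z
  proof -
    have "(g 0 has_field_derivative g 1 z) (at z)"
      using Suc.prems(1)[OF that] by simp
    then have "(f has_field_derivative g 1 z) (at z)"
      by (rule has_field_derivative_transform_within_open[OF _ assms(1) that])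
         (use Suc.prems(2) in auto)
    then show ?thesis by (rule DERIV_imp_deriv)
  qed
  have "(deriv ^^ Suc k) f y = (deriv ^^ k) (deriv f) y"
    by (simp only: funpow_Suc_right o_apply)
  also have "\<dots> = g (Suc k) y"
    using Suc.IH[where g = "\<lambda>j. g (Suc j)"] Suc.prems deriv_f by auto
  finally show ?case .
qed

lemma funpow_deriv_poly_on_open:
  assumes "open S" and "\<And>y. y \<in> S \<Longrightarrow> f y = poly p y" and "y \<in> S"
  shows "(deriv ^^ k) f y = poly ((pderiv ^^ k) p) y"
  by (rule funpow_deriv_eq_on_open[OF assms(1) _ _ assms(3)]) (simp_all add: poly_DERIV assms(2))

text \<open>
  \<open>rodrigues_poly \<beta> a m\<close> is the polynomial \<open>R\<^sub>m\<close> with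
  \<open>(d/dy)\<^sup>m (y\<^sup>a e\<^sup>-\<^sup>\<beta>\<^sup>y) = y\<^sup>a\<^sup>-\<^sup>m e\<^sup>-\<^sup>\<beta>\<^sup>y R\<^sub>m(y)\<close> on \<open>y > 0\<close>.
\<close>
fun rodrigues_poly :: "real \<Rightarrow> real \<Rightarrow> nat \<Rightarrow> real poly" where
  "rodrigues_poly \<beta> a 0 = 1"
| "rodrigues_poly \<beta> a (Suc m) =
     smult (a - real m) (rodrigues_poly \<beta> a m)
     + [:0, 1:] * (pderiv (rodrigues_poly \<beta> a m) - smult \<beta> (rodrigues_poly \<beta> a m))"

lemma has_real_derivative_rodrigues:
  assumes "y > 0"
  shows "((\<lambda>y. y powr (a - real m) * exp (- \<beta> * y) * poly (rodrigues_poly \<beta> a m) y)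
           has_real_derivative
           y powr (a - real (Suc m)) * exp (- \<beta> * y) * poly (rodrigues_poly \<beta> a (Suc m)) y) (at y)"
proof -
  have powr_eq: "y powr (a - real m) = y * y powr (a - real (Suc m))"
    using assms by (simp add: powr_add[symmetric] powr_mult_base)
  have powr_pred: "y powr (a - real m - 1) = y powr (a - real (Suc m))"
    by (simp add: algebra_simps)
  have "((\<lambda>y. y powr (a - real m)) has_real_derivative (a - real m) * y powr (a - real m - 1)) (at y)"
    by (rule has_real_derivative_powr[OF assms])
  moreover have "((\<lambda>y. exp (- \<beta> * y)) has_real_derivative exp (- \<beta> * y) * (- \<beta>)) (at y)"
    by (auto intro!: derivative_eq_intros)
  moreover have "(poly (rodrigues_poly \<beta> a m) has_real_derivative
                   poly (pderiv (rodrigues_poly \<beta> a m)) y) (at y)"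
    by (rule poly_DERIV)
  ultimately show ?thesis
    by (rule DERIV_cong[OF DERIV_mult[OF DERIV_mult]])
       (simp add: powr_eq powr_pred algebra_simps)
qed

lemma funpow_deriv_rodrigues:
  assumes "y > 0"
  shows "(deriv ^^ m) (\<lambda>y. y powr a * exp (- \<beta> * y)) y
         = y powr (a - real m) * exp (- \<beta> * y) * poly (rodrigues_poly \<beta> a m) y"
  by (rule funpow_deriv_eq_on_open[where S = "{0<..}"])
     (use assms has_real_derivative_rodrigues in auto)

lemma pderiv_rodrigues_poly:
  "pderiv (rodrigues_poly \<beta> a (Suc m)) = smult (- \<beta> * real (Suc m)) (rodrigues_poly \<beta> a m)"
proof (induction m)
  case 0
  then show ?case by (simp add: pderiv_pCons)
next
  case (Suc m)
  show ?case
    apply (subst rodrigues_poly.simps(2))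
    apply (simp only: pderiv_add pderiv_smult pderiv_mult pderiv_diff Suc)
    apply (rule poly_eqI)
    apply (simp add: pderiv_pCons coeff_pCons algebra_simps split: nat.split)
    done
qed

definition laguerre_poly :: "real \<Rightarrow> real \<Rightarrow> nat \<Rightarrow> real poly" where
  "laguerre_poly \<theta> \<beta> i = smult (1 / fact i) (rodrigues_poly \<beta> (real i + \<theta>) i)"

lemma gen_laguerre_eq_poly:
  assumes "y > 0"
  shows "gen_laguerre \<theta> \<beta> i y = poly (laguerre_poly \<theta> \<beta> i) y"
proof -
  have powr_cancel: "y powr (- \<theta>) * y powr \<theta> = 1"
    using assms by (simp add: powr_add[symmetric])
  have exp_cancel: "exp (\<beta> * y) * exp (- \<beta> * y) = 1"
    by (simp add: exp_add[symmetric])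
  have "gen_laguerre \<theta> \<beta> i y
      = (1 / fact i) * (y powr (- \<theta>) * y powr \<theta>) * (exp (\<beta> * y) * exp (- \<beta> * y))
        * poly (rodrigues_poly \<beta> (real i + \<theta>) i) y"
    unfolding gen_laguerre_def funpow_deriv_rodrigues[OF assms] by (simp add: algebra_simps)
  then show ?thesis
    unfolding powr_cancel exp_cancel laguerre_poly_def by simp
qed

lemma pderiv_laguerre_poly:
  "pderiv (laguerre_poly \<theta> \<beta> (Suc i)) = smult (- \<beta>) (laguerre_poly (\<theta> + 1) \<beta> i)"
proof -
  have param: "real (Suc i) + \<theta> = real i + (\<theta> + 1)"
    by simp
  have coeff: "1 / fact (Suc i) * (- \<beta> * real (Suc i)) = - \<beta> * (1 / fact i :: real)"
    by (simp add: field_simps del: of_nat_Suc)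
  show ?thesis
    unfolding laguerre_poly_def pderiv_smult param pderiv_rodrigues_poly smult_smult coeff ..
qed

lemma funpow_pderiv_laguerre_poly:
  "(pderiv ^^ n) (laguerre_poly \<theta> \<beta> i)
   = (if i < n then 0 else smult ((- \<beta>) ^ n) (laguerre_poly (\<theta> + real n) \<beta> (i - n)))"
proof (induction n arbitrary: \<theta> i)
  case 0
  then show ?case by simp
next
  case (Suc n)
  show ?case
  proof (cases i)
    case 0
    have "pderiv (laguerre_poly \<theta> \<beta> 0) = 0"
      by (simp add: laguerre_poly_def)
    then show ?thesis
      using 0 by (simp only: funpow_Suc_right o_apply) simp
  next
    case (Suc j)
    have param: "\<theta> + 1 + real n = \<theta> + real (Suc n)"
      by simp
    show ?thesis
      using Suc
      by (simp only: funpow_Suc_right o_apply pderiv_laguerre_poly higher_pderiv_smult Suc.IH param)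
         simp
  qed
qed

lemma integrable_on_powr_diff:
  assumes "c > -1" and "x > (0::real)"
  shows "(\<lambda>t. (x - t) powr c) integrable_on {0..x}"
proof -
  have "(\<lambda>s. s powr c) integrable_on cbox 0 x"
    using integrable_on_powr_from_0[of c x] assms by simp
  then have "(\<lambda>t. (\<lambda>s. s powr c) ((-1) *\<^sub>R t + x)) integrable_on
             ((\<lambda>t. (1 / (-1)) *\<^sub>R t - ((1 / (-1)) *\<^sub>R x)) ` cbox 0 x)"
    by (rule integrable_on_affinity[rotated]) simp
  moreover have "(\<lambda>t. (1 / (-1)) *\<^sub>R t - ((1 / (-1)) *\<^sub>R x)) ` cbox 0 x = {0..x}"
    by (auto intro!: image_eqI[where x = "x - t" for t])
  ultimately show ?thesis
    by simp
qed

lemma integrable_on_powr_diff_mult: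
  assumes "c > -1" and "x > (0::real)" and "continuous_on {0..x} f"
  shows "(\<lambda>t. (x - t) powr c * f t) integrable_on {0..x}"
proof -
  have "(\<lambda>t. (x - t) powr c) absolutely_integrable_on {0..x}"
    by (rule nonnegative_absolutely_integrable_1[OF integrable_on_powr_diff[OF assms(1,2)]]) simp
  moreover have "f \<in> borel_measurable (lebesgue_on {0..x})"
    using assms(3) by (rule continuous_imp_measurable_on_sets_lebesgue) simp
  moreover have "bounded (f ` {0..x})"
    using assms(3) by (intro compact_imp_bounded compact_continuous_image) simp_all
  ultimately have "(\<lambda>t. f t * (x - t) powr c) absolutely_integrable_on {0..x}"
    by (intro absolutely_integrable_bounded_measurable_product_real) simp_all
  then show ?thesis
    using set_lebesgue_integral_eq_integral(1) by (simp add: mult.commute)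
qed

text \<open>
  The integrand of \<^const>\<open>caputo_var\<close> evaluates \<open>(deriv ^^ n) u\<close> at \<open>t = 0\<close>, where \<open>u\<close> need not
  agree with the polynomial; the single point is negligible.
\<close>
lemma caputo_var_poly:
  assumes "\<And>y. y > 0 \<Longrightarrow> u y = poly p y"
  shows "caputo_var \<rho> n u x
         = (1 / Gamma (real n - \<rho> x)) *
           integral {0..x} (\<lambda>t. (x - t) powr (real n - \<rho> x - 1) * poly ((pderiv ^^ n) p) t)"
proof -
  have "(deriv ^^ n) u t = poly ((pderiv ^^ n) p) t" if "t > 0" for t
    by (rule funpow_deriv_poly_on_open[where S = "{0<..}"]) (use that assms in auto)
  then show ?thesis
    unfolding caputo_var_def by (intro arg_cong[where f = "(*) _"] integral_spike[of "{0}"]) auto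
qed

lemma D_coef_eq_integral:
  "D_coef i n \<theta> \<beta> \<rho> x
   = (1 / Gamma (real n - \<rho> x)) *
     integral {0..x}
       (\<lambda>t. (x - t) powr (real n - \<rho> x - 1) * poly ((pderiv ^^ n) (laguerre_poly \<theta> \<beta> i)) t)"
proof (cases "i < n")
  case True
  then show ?thesis
    by (simp add: D_coef_def funpow_pderiv_laguerre_poly)
next
  case False
  have "integral {0..x} (\<lambda>t. (x - t) powr (real n - \<rho> x - 1) *
          poly ((pderiv ^^ n) (laguerre_poly \<theta> \<beta> i)) t)
      = (- \<beta>) ^ n * integral {0..x} (\<lambda>t. (x - t) powr (real n - \<rho> x - 1) *
          gen_laguerre (\<theta> + real n) \<beta> (i - n) t)"
    unfolding integral_mult_right[symmetric]
    by (intro integral_spike[of "{0}"])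
       (auto simp: False funpow_pderiv_laguerre_poly gen_laguerre_eq_poly)
  then show ?thesis
    by (simp add: D_coef_def lag_hat_def False)
qed

theorem mainTheorem2:
  fixes \<theta> \<beta> \<rho>min \<rho>max :: real and n N :: nat and \<rho> :: "real \<Rightarrow> real"
    and l :: "nat \<Rightarrow> real" and x :: real
  assumes "\<theta> > -1" and "\<beta> > 0" and "n > 0"
    and "real n - 1 < \<rho>min" and "\<rho>max < real n"
    and "\<And>y. y > 0 \<Longrightarrow> \<rho>min < \<rho> y \<and> \<rho> y < \<rho>max"
    and "x > 0"
  shows "caputo_var \<rho> n (\<lambda>y. \<Sum>i\<le>N. l i * gen_laguerre \<theta> \<beta> i y) x
         = (\<Sum>i\<le>N. l i * D_coef i n \<theta> \<beta> \<rho> x)"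
proof -
  define c where "c = real n - \<rho> x - 1"
  define P where "P i = (pderiv ^^ n) (laguerre_poly \<theta> \<beta> i)" for i
  have "c > -1"
    using assms(5-7) unfolding c_def by force
  then have integrable: "(\<lambda>t. (x - t) powr c * poly (P i) t) integrable_on {0..x}" for i
    by (intro integrable_on_powr_diff_mult assms(7) continuous_intros)
  have "caputo_var \<rho> n (\<lambda>y. \<Sum>i\<le>N. l i * gen_laguerre \<theta> \<beta> i y) x
      = (1 / Gamma (real n - \<rho> x)) * integral {0..x}
          (\<lambda>t. (x - t) powr c * poly ((pderiv ^^ n) (\<Sum>i\<le>N. smult (l i) (laguerre_poly \<theta> \<beta> i))) t)"
    unfolding c_def
    by (rule caputo_var_poly) (simp add: poly_sum gen_laguerre_eq_poly)
  also have "\<dots> = (1 / Gamma (real n - \<rho> x)) *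
                 integral {0..x} (\<lambda>t. \<Sum>i\<le>N. l i * ((x - t) powr c * poly (P i) t))"
    by (simp add: P_def higher_pderiv_sum higher_pderiv_smult poly_sum sum_distrib_left algebra_simps)
  also have "\<dots> = (1 / Gamma (real n - \<rho> x)) *
                 (\<Sum>i\<le>N. l i * integral {0..x} (\<lambda>t. (x - t) powr c * poly (P i) t))"
    by (simp add: integral_sum integrable integrable_on_mult_right)
  also have "\<dots> = (\<Sum>i\<le>N. l i * D_coef i n \<theta> \<beta> \<rho> x)"
    by (simp add: D_coef_eq_integral P_def c_def sum_distrib_left mult.left_commute)
  finally show ?thesis .
qed

end
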